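(* Let $\mu$ be a distribution on $\{0,1\}^{\mathbb{N}}$ such that the space $(\mathbb{N},\xi)$ is not totally bounded, and let $\varepsilon\in(0,1]$ be such that $\mathcal{N}_\xi(\varepsilon)=\infty$. Then for all $n\ge1$, $\Delta_n(\mu)\ge\frac{\varepsilon^2}{6}$. Consequently, if $\Delta_n(\mu)\to0$ as $n\to\infty$, then $(\mathbb{N},\xi)$ is totally bounded.
   Context: For $X\sim\mu$, define $\xi(i,j):=\mathbb{P}(X_i\neq X_j)$ for $i,j\in\mathbb{N}$. For $\varepsilon>0$, $\mathcal{N}_\xi(\varepsilon)$ is the $\varepsilon$-covering number of $(\mathbb{N},\xi)$: the minimal cardinality of a set $S\subset\mathbb{N}$ such that every $i\in\mathbb{N}$ has some $s\in S$ with $\xi(i,s)\le\varepsilon$. $(\mathbb{N},\xi)$ is totally bounded if $\mathcal{N}_\xi(\varepsilon)<\infty$ for all $\varepsilon>0$. For $n\ge1$, with $X^{(1)},\dots,X^{(n)}$ i.i.d. from $\mu$, $\Delta_n(\mu):=\mathbb{E}\sup_{j\in\mathbb{N}}\left|\frac1n\sum_{i=1}^nX^{(i)}_j-\mathbb{E}[X_j]\right|$. *)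

theory Defs
  imports "HOL-Probability.Probability"
begin

text \<open>A distribution mu on {0,1}^N is a probability measure on nat => bool whose
  sigma algebra is the product sigma algebra (true = 1, false = 0).\<close>

definition binseq_distr :: "(nat \<Rightarrow> bool) measure \<Rightarrow> bool" where
  "binseq_distr \<mu> \<longleftrightarrow> prob_space \<mu> \<and>
     sets \<mu> = sets (\<Pi>\<^sub>M i\<in>(UNIV::nat set). count_space (UNIV::bool set))"

definition xi :: "(nat \<Rightarrow> bool) measure \<Rightarrow> nat \<Rightarrow> nat \<Rightarrow> real" where
  "xi \<mu> i j = measure \<mu> {x \<in> space \<mu>. x i \<noteq> x j}"

definition covering_number :: "(nat \<Rightarrow> bool) measure \<Rightarrow> real \<Rightarrow> enat" where
  "covering_number \<mu> \<epsilon> =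
     Inf ((\<lambda>S. if finite S then enat (card S) else \<infinity>) `
          {S :: nat set. \<forall>i. \<exists>s\<in>S. xi \<mu> i s \<le> \<epsilon>})"

definition xi_totally_bounded :: "(nat \<Rightarrow> bool) measure \<Rightarrow> bool" where
  "xi_totally_bounded \<mu> \<longleftrightarrow> (\<forall>\<epsilon>>0. covering_number \<mu> \<epsilon> < \<infinity>)"

text \<open>Delta_n(mu) = E sup_j |1/n sum_{i<n} X^(i)_j - E X_j| with X^(0..n-1) iid from mu
  (modelled by the product measure), where booleans are read as 0/1.\<close>
definition Delta :: "nat \<Rightarrow> (nat \<Rightarrow> bool) measure \<Rightarrow> real" where
  "Delta n \<mu> = (\<integral>X. (SUP j. \<bar>(\<Sum>i<n. of_bool (X i j)) / real n - measure \<mu> {x \<in> space \<mu>. x j}\<bar>)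
                 \<partial>(\<Pi>\<^sub>M i\<in>{..<n}. \<mu>))"

end

theory Submission
  imports Defs
begin

(* If N(eps) is infinite, then for every sample of size n two coordinates j, k have identical
   sample columns although P(X_j ~= X_k) > eps: the columns take finitely many values, and a point
   eps-far from one representative of each column exists. So the empirical process of the
   mismatch indicators 1[x_j ~= x_k] deviates by more than eps. Symmetrization bounds this by
   twice a Rademacher average of the mismatch class; since 1[x_j ~= x_k] = |x_j - x_k|, the
   contraction principle replaces it by the Rademacher average of x_j - x_k, which splits into two
   Rademacher averages of the centred coordinates (each at most 2 n Delta_n by desymmetrization)
   plus E |s_1 + ... + s_n| <= sqrt n. Hence eps <= 8 Delta_n + 2 / sqrt n. Averaging over blocks
   shows Delta_(m n) <= Delta_n, so eps <= 8 Delta_n; finally three pairwise eps-far coordinates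
   force 3 eps < 2, whence eps^2 / 6 <= eps / 8. *)

section \<open>Averages over random signs\<close>

text \<open>\<open>sign_avg n F\<close> is the expectation of \<open>F s\<close> for independent uniform signs
  \<open>s 0, \<dots>, s (n - 1)\<close>, the remaining \<open>s i\<close> being \<open>0\<close>.\<close>
fun sign_avg :: "nat \<Rightarrow> ((nat \<Rightarrow> real) \<Rightarrow> real) \<Rightarrow> real" where
  "sign_avg 0 F = F (\<lambda>_. 0)"
| "sign_avg (Suc n) F = (sign_avg n (\<lambda>s. F (s(n := 1))) + sign_avg n (\<lambda>s. F (s(n := -1)))) / 2"

definition sign_vector :: "nat \<Rightarrow> (nat \<Rightarrow> real) \<Rightarrow> bool" where
  "sign_vector n s \<longleftrightarrow> (\<forall>i<n. s i = 1 \<or> s i = -1)"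

lemma sign_vector_upd: "sign_vector n s \<Longrightarrow> c = 1 \<or> c = -1 \<Longrightarrow> sign_vector (Suc n) (s(n := c))"
  unfolding sign_vector_def by (auto simp: less_Suc_eq)

lemma sign_avg_const [simp]: "sign_avg n (\<lambda>_. c) = c"
  by (induction n) auto

lemma sign_avg_add: "sign_avg n (\<lambda>s. F s + G s) = sign_avg n F + sign_avg n G"
  by (induction n arbitrary: F G) (auto simp: field_simps)

lemma sign_avg_mult_left: "sign_avg n (\<lambda>s. c * F s) = c * sign_avg n F"
  by (induction n arbitrary: F) (auto simp: field_simps)

lemma sign_avg_mono:
  assumes "\<And>s. sign_vector n s \<Longrightarrow> F s \<le> G s"
  shows "sign_avg n F \<le> sign_avg n G"
  using assms
proof (induction n arbitrary: F G)
  case 0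
  then show ?case by (simp add: sign_vector_def)
next
  case (Suc n)
  have "sign_avg n (\<lambda>s. F (s(n := c))) \<le> sign_avg n (\<lambda>s. G (s(n := c)))" if "c = 1 \<or> c = -1" for c
    using that by (intro Suc.IH Suc.prems sign_vector_upd)
  then show ?case by (simp add: add_mono divide_right_mono)
qed

lemma sign_avg_cong:
  "(\<And>s. sign_vector n s \<Longrightarrow> F s = G s) \<Longrightarrow> sign_avg n F = sign_avg n G"
  using sign_avg_mono[of n F G] sign_avg_mono[of n G F] by force

lemma sign_avg_uminus: "sign_avg n (\<lambda>s. F (\<lambda>i. - s i)) = sign_avg n F"
proof (induction n arbitrary: F)
  case (Suc n)
  have "(\<lambda>i. - (s(n := c)) i) = (\<lambda>i. - s i)(n := - c)" for s :: "nat \<Rightarrow> real" and c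
    by auto
  then show ?case
    using Suc.IH[of "\<lambda>s. F (s(n := 1))"] Suc.IH[of "\<lambda>s. F (s(n := -1))"] by simp
qed simp

lemma sign_avg_square_sum: "sign_avg n (\<lambda>s. (c + (\<Sum>i<n. s i))\<^sup>2) = c\<^sup>2 + n"
proof (induction n arbitrary: c)
  case (Suc n)
  have "sign_avg n (\<lambda>s. (c + (\<Sum>i<Suc n. (s(n := d)) i))\<^sup>2) = sign_avg n (\<lambda>s. ((c + d) + (\<Sum>i<n. s i))\<^sup>2)" for d
    by (rule sign_avg_cong) (simp add: algebra_simps)
  then show ?case
    using Suc.IH[of "c + 1"] Suc.IH[of "c - 1"] by (simp add: power2_eq_square algebra_simps)
qed simp

lemma sign_avg_abs_sum_le_sqrt: "sign_avg n (\<lambda>s. \<bar>\<Sum>i<n. s i\<bar>) \<le> sqrt n"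
proof (cases "n = 0")
  case False
  define r where "r = sqrt n"
  have "r > 0" using False by (simp add: r_def)
  \<comment> \<open>AM-GM: \<open>\<bar>S\<bar> \<le> S\<^sup>2 / (2 r) + r / 2\<close>, and the second moment of \<open>S\<close> is \<open>n = r\<^sup>2\<close>.\<close>
  have am_gm: "\<bar>S\<bar> \<le> 1 / (2 * r) * (0 + S)\<^sup>2 + r / 2" for S :: real
  proof -
    have "2 * \<bar>S\<bar> * r \<le> S\<^sup>2 + r * r"
      using zero_le_power2[of "\<bar>S\<bar> - r"] by (simp add: power2_eq_square algebra_simps)
    with \<open>r > 0\<close> show ?thesis by (simp add: field_simps)
  qed
  have "sign_avg n (\<lambda>s. \<bar>\<Sum>i<n. s i\<bar>) \<le> sign_avg n (\<lambda>s. 1 / (2 * r) * (0 + (\<Sum>i<n. s i))\<^sup>2 + r / 2)"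
    by (intro sign_avg_mono am_gm)
  also have "\<dots> = 1 / (2 * r) * (r * r) + r / 2"
    by (simp only: sign_avg_add sign_avg_mult_left sign_avg_const sign_avg_square_sum)
       (simp add: r_def)
  also have "\<dots> = r" using \<open>r > 0\<close> by simp
  finally show ?thesis by (simp add: r_def)
qed simp

lemma integrable_sign_avg:
  "(\<And>s. integrable M (F s)) \<Longrightarrow> integrable M (\<lambda>x. sign_avg n (\<lambda>s. F s x))"
  by (induction n arbitrary: F) auto

lemma integral_sign_avg:
  "(\<And>s. integrable M (F s)) \<Longrightarrow> (\<integral>x. sign_avg n (\<lambda>s. F s x) \<partial>M) = sign_avg n (\<lambda>s. integral\<^sup>L M (F s))"
  by (induction n arbitrary: F) (simp_all add: integrable_sign_avg)

lemma sign_avg_integral_mono: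
  assumes "\<And>s. integrable M (F s)" "\<And>s. integrable M (G s)"
    and "\<And>x. x \<in> space M \<Longrightarrow> sign_avg n (\<lambda>s. F s x) \<le> sign_avg n (\<lambda>s. G s x)"
  shows "sign_avg n (\<lambda>s. integral\<^sup>L M (F s)) \<le> sign_avg n (\<lambda>s. integral\<^sup>L M (G s))"
  using assms by (simp add: integral_sign_avg[symmetric] integral_mono integrable_sign_avg)

lemma bdd_above_range_abs_le: "(\<And>t. \<bar>f t\<bar> \<le> (C::real)) \<Longrightarrow> bdd_above (range f)"
  by (rule bdd_aboveI2[where M=C]) (simp add: abs_le_iff)

lemma abs_SUP_le:
  fixes f :: "'t \<Rightarrow> real"
  assumes "\<And>t. \<bar>f t\<bar> \<le> C"
  shows "\<bar>SUP t. f t\<bar> \<le> C"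
proof -
  have "f t \<le> (SUP t. f t)" for t
    by (rule cSUP_upper[OF UNIV_I bdd_above_range_abs_le[OF assms]])
  moreover have "(SUP t. f t) \<le> C"
    using assms by (intro cSUP_least) (auto simp: abs_le_iff)
  moreover have "- C \<le> f undefined"
    using assms[of undefined] by linarith
  ultimately show ?thesis
    by (meson abs_le_iff minus_le_iff order_trans)
qed

lemma SUP_add_abs_plus_SUP_diff_abs_le:
  fixes W c :: "'t \<Rightarrow> real"
  assumes W: "\<And>t. \<bar>W t\<bar> \<le> B" and c: "\<And>t. \<bar>c t\<bar> \<le> C"
  shows "(SUP t. W t + \<bar>c t\<bar>) + (SUP t. W t - \<bar>c t\<bar>) \<le> (SUP t. W t + c t) + (SUP t. W t - c t)"
    (is "?Lp + ?Lm \<le> ?Rp + ?Rm")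
proof -
  have bdd: "bdd_above (range (\<lambda>t. W t + d t))" if "\<And>t. \<bar>d t\<bar> \<le> C" for d
    by (rule bdd_above_range_abs_le, rule order_trans[OF abs_triangle_ineq add_mono[OF W that]])
  have upper_plus: "W t + c t \<le> ?Rp" for t
    using bdd[of c] c by (intro cSUP_upper) auto
  have upper_minus: "W t - c t \<le> ?Rm" for t
    using bdd[of "\<lambda>t. - c t"] c by (intro cSUP_upper) auto
  have "W u + \<bar>c u\<bar> + (W v - \<bar>c v\<bar>) \<le> ?Rp + ?Rm" for u v
    using upper_plus[of u] upper_minus[of v] upper_plus[of v] upper_minus[of u]
    by (cases "c v \<le> c u") (auto simp: abs_if split: if_splits)
  then have "?Lp \<le> ?Rp + ?Rm - (W v - \<bar>c v\<bar>)" for v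
    by (intro cSUP_least) (auto simp: algebra_simps)
  then have "?Lm \<le> ?Rp + ?Rm - ?Lp"
    by (intro cSUP_least) (auto simp: algebra_simps)
  then show ?thesis by simp
qed

lemma abs_sum_mult_le:
  fixes s g :: "nat \<Rightarrow> real"
  assumes "\<And>i. \<bar>g i\<bar> \<le> A"
  shows "\<bar>\<Sum>i<n. s i * g i\<bar> \<le> (\<Sum>i<n. \<bar>s i\<bar>) * A"
proof -
  have "\<bar>\<Sum>i<n. s i * g i\<bar> \<le> (\<Sum>i<n. \<bar>s i * g i\<bar>)"
    by (rule sum_abs)
  also have "\<dots> \<le> (\<Sum>i<n. \<bar>s i\<bar> * A)"
    using assms by (intro sum_mono) (simp add: abs_mult mult_left_mono)
  finally show ?thesis by (simp add: sum_distrib_right)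
qed

text \<open>The contraction principle for the \<open>1\<close>-Lipschitz map \<open>\<bar>_\<bar>\<close>: conditioning on all signs
  but the last one reduces it to \<open>SUP_add_abs_plus_SUP_diff_abs_le\<close>.\<close>
lemma sign_avg_SUP_abs_le:
  fixes a :: "nat \<Rightarrow> 't \<Rightarrow> real" and U :: "'t \<Rightarrow> real"
  assumes a: "\<And>i t. \<bar>a i t\<bar> \<le> A" and U: "\<And>t. \<bar>U t\<bar> \<le> B"
  shows "sign_avg n (\<lambda>s. SUP t. U t + (\<Sum>i<n. s i * \<bar>a i t\<bar>))
    \<le> sign_avg n (\<lambda>s. SUP t. U t + (\<Sum>i<n. s i * a i t))"
  using U
proof (induction n arbitrary: U B)
  case (Suc n)
  let ?W = "\<lambda>s t. U t + (\<Sum>i<n. s i * a i t)"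
  have last_sign: "sign_avg n (\<lambda>s. SUP t. U t + (\<Sum>i<Suc n. (s(n := c)) i * b i t))
      = sign_avg n (\<lambda>s. SUP t. (U t + c * b n t) + (\<Sum>i<n. s i * b i t))" for c b
    by (rule sign_avg_cong) (simp add: algebra_simps)
  have step_abs: "sign_avg n (\<lambda>s. SUP t. U t + (\<Sum>i<Suc n. (s(n := c)) i * \<bar>a i t\<bar>))
      \<le> sign_avg n (\<lambda>s. SUP t. ?W s t + c * \<bar>a n t\<bar>)" if "\<bar>c\<bar> = 1" for c
  proof -
    have "\<bar>U t + c * \<bar>a n t\<bar>\<bar> \<le> B + A" for t
      using Suc.prems[of t] a[of n t] that by (auto simp: abs_mult intro: order_trans[OF abs_triangle_ineq])
    from Suc.IH[OF this] show ?thesis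
      unfolding last_sign by (simp add: algebra_simps)
  qed
  have W_bound: "\<bar>?W s t\<bar> \<le> B + (\<Sum>i<n. \<bar>s i\<bar>) * A" for s t
    using Suc.prems[of t] abs_sum_mult_le[where s=s and g="\<lambda>i. a i t" and A=A and n=n] a
    by (auto intro: order_trans[OF abs_triangle_ineq])
  have "sign_avg n (\<lambda>s. SUP t. ?W s t + 1 * \<bar>a n t\<bar>) + sign_avg n (\<lambda>s. SUP t. ?W s t + -1 * \<bar>a n t\<bar>)
      \<le> sign_avg n (\<lambda>s. SUP t. ?W s t + 1 * a n t) + sign_avg n (\<lambda>s. SUP t. ?W s t + -1 * a n t)"
    unfolding sign_avg_add[symmetric]
    using SUP_add_abs_plus_SUP_diff_abs_le[OF W_bound a] by (intro sign_avg_mono) simp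
  moreover have "sign_avg n (\<lambda>s. SUP t. U t + (\<Sum>i<Suc n. (s(n := c)) i * a i t))
      = sign_avg n (\<lambda>s. SUP t. ?W s t + c * a n t)" for c
    unfolding last_sign by (simp add: algebra_simps)
  ultimately show ?case
    using step_abs[of 1] step_abs[of "-1"] by (simp only: sign_avg.simps) simp
qed simp

section \<open>Samples and their symmetrization\<close>

lemma borel_measurable_SUP_bounded:
  fixes F :: "'t::countable \<Rightarrow> 'b \<Rightarrow> real"
  assumes "\<And>t. F t \<in> borel_measurable N" "\<And>t x. \<bar>F t x\<bar> \<le> C"
  shows "(\<lambda>x. SUP t. F t x) \<in> borel_measurable N"
  using assms by (intro borel_measurable_cSUP bdd_above_range_abs_le) auto

definition signed_sup :: "nat \<Rightarrow> ('t \<Rightarrow> 'a \<Rightarrow> real) \<Rightarrow> (nat \<Rightarrow> real) \<Rightarrow> (nat \<Rightarrow> 'a) \<Rightarrow> real" where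
  "signed_sup n g s x = (SUP t. \<Sum>i<n. s i * g t (x i))"

lemma signed_sup_upper:
  assumes "\<And>t \<omega>. \<bar>g t \<omega>\<bar> \<le> A"
  shows "(\<Sum>i<n. s i * g t (x i)) \<le> signed_sup n g s x"
  unfolding signed_sup_def
  using assms by (intro cSUP_upper bdd_above_range_abs_le[where C="(\<Sum>i<n. \<bar>s i\<bar>) * A"] abs_sum_mult_le) auto

lemma abs_signed_sup_le:
  assumes "\<And>t \<omega>. \<bar>g t \<omega>\<bar> \<le> A"
  shows "\<bar>signed_sup n g s x\<bar> \<le> (\<Sum>i<n. \<bar>s i\<bar>) * A"
  unfolding signed_sup_def using assms by (intro abs_SUP_le abs_sum_mult_le) auto

lemma borel_measurable_signed_sup [measurable]:
  fixes g :: "'t::countable \<Rightarrow> 'a \<Rightarrow> real"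
  assumes "\<And>t. g t \<in> borel_measurable M" and "\<And>t \<omega>. \<bar>g t \<omega>\<bar> \<le> A"
  shows "signed_sup n g s \<in> borel_measurable (\<Pi>\<^sub>M i\<in>{..<n}. M)"
  unfolding signed_sup_def[abs_def]
  using assms by (intro borel_measurable_SUP_bounded[where C="(\<Sum>i<n. \<bar>s i\<bar>) * A"] abs_sum_mult_le
      borel_measurable_sum borel_measurable_times borel_measurable_const
      measurable_compose[OF measurable_component_singleton]) auto

definition split_sample :: "nat \<Rightarrow> (nat \<Rightarrow> 'a) \<Rightarrow> (nat \<Rightarrow> 'a) \<times> (nat \<Rightarrow> 'a)" where
  "split_sample n \<omega> = (restrict \<omega> {..<n}, \<lambda>i\<in>{..<n}. \<omega> (n + i))"

definition swap_signs ::
    "nat \<Rightarrow> (nat \<Rightarrow> real) \<Rightarrow> (nat \<Rightarrow> 'a) \<times> (nat \<Rightarrow> 'a) \<Rightarrow> (nat \<Rightarrow> 'a) \<times> (nat \<Rightarrow> 'a)" where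
  "swap_signs n s z =
     ((\<lambda>i\<in>{..<n}. if s i < 0 then snd z i else fst z i), (\<lambda>i\<in>{..<n}. if s i < 0 then fst z i else snd z i))"

definition swap_index :: "nat \<Rightarrow> (nat \<Rightarrow> real) \<Rightarrow> nat \<Rightarrow> nat" where
  "swap_index n s i =
     (if i < n then (if s i < 0 then n + i else i)
      else if i < 2 * n then (if s (i - n) < 0 then i - n else i) else i)"

lemma swap_index_less: "i < 2 * n \<Longrightarrow> swap_index n s i < 2 * n"
  by (auto simp: swap_index_def)

lemma inj_on_swap_index: "inj_on (swap_index n s) {..<2 * n}"
  by (rule inj_onI) (auto simp: swap_index_def split: if_splits)

lemma swap_signs_split_sample:
  "swap_signs n s (split_sample n \<omega>) = split_sample n (\<lambda>i\<in>{..<2 * n}. \<omega> (swap_index n s i))"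
  by (auto simp: swap_signs_def split_sample_def swap_index_def fun_eq_iff)

context prob_space
begin

abbreviation sample :: "nat \<Rightarrow> (nat \<Rightarrow> 'a) measure" where
  "sample n \<equiv> \<Pi>\<^sub>M i\<in>{..<n}. M"

lemma prob_space_sample: "prob_space (sample n)"
  by (intro prob_space_PiM prob_space_axioms)

lemma prob_space_sample_pair: "prob_space (sample n \<Otimes>\<^sub>M sample n)"
  by (intro prob_space_pair prob_space_sample)

lemma measurable_split_sample [measurable]:
  "split_sample n \<in> measurable (sample (2 * n)) (sample n \<Otimes>\<^sub>M sample n)"
  unfolding split_sample_def by measurable

lemma measurable_swap_signs [measurable]:
  "swap_signs n s \<in> measurable (sample n \<Otimes>\<^sub>M sample n) (sample n \<Otimes>\<^sub>M sample n)"
  unfolding swap_signs_def by measurable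

lemma distr_split_sample:
  "distr (sample (2 * n)) (sample n \<Otimes>\<^sub>M sample n) (split_sample n) = sample n \<Otimes>\<^sub>M sample n"
proof -
  interpret product_sigma_finite "\<lambda>_. M"
    by (simp add: product_sigma_finite_def prob_space_imp_sigma_finite prob_space_axioms)
  let ?I = "{..<n}" and ?J = "{n..<2 * n}"
  define shift where "shift y = (\<lambda>i\<in>{..<n}. y (n + i))" for y :: "nat \<Rightarrow> 'a"
  have [measurable]: "shift \<in> measurable (\<Pi>\<^sub>M i\<in>?J. M) (sample n)"
    unfolding shift_def by measurable
  have distr_shift: "distr (\<Pi>\<^sub>M i\<in>?J. M) (sample n) shift = sample n"
    unfolding shift_def
    using distr_PiM_reindex[of ?J "\<lambda>_. M" "\<lambda>i. n + i" ?I] by (simp add: prob_space_axioms)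
  have union: "?I \<union> ?J = {..<2 * n}" by auto
  have [measurable]: "merge ?I ?J \<in> measurable (sample n \<Otimes>\<^sub>M (\<Pi>\<^sub>M i\<in>?J. M)) (sample (2 * n))"
    using measurable_merge[of ?I ?J "\<lambda>_. M"] by (simp only: union)
  have "distr (sample (2 * n)) (sample n \<Otimes>\<^sub>M sample n) (split_sample n)
      = distr (distr (sample n \<Otimes>\<^sub>M (\<Pi>\<^sub>M i\<in>?J. M)) (sample (2 * n)) (merge ?I ?J))
          (sample n \<Otimes>\<^sub>M sample n) (split_sample n)"
    using distr_merge[of ?I ?J] by (simp add: union disjoint_iff)
  also have "\<dots> = distr (sample n \<Otimes>\<^sub>M (\<Pi>\<^sub>M i\<in>?J. M)) (sample n \<Otimes>\<^sub>M sample n) (split_sample n \<circ> merge ?I ?J)"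
    by (rule distr_distr) measurable
  also have "\<dots> = distr (sample n \<Otimes>\<^sub>M (\<Pi>\<^sub>M i\<in>?J. M)) (sample n \<Otimes>\<^sub>M sample n) (\<lambda>(x, y). (x, shift y))"
    by (rule distr_cong)
      (auto simp: split_sample_def shift_def merge_def space_pair_measure space_PiM fun_eq_iff PiE_def extensional_def)
  also have "\<dots> = distr (sample n) (sample n) (\<lambda>x. x) \<Otimes>\<^sub>M distr (\<Pi>\<^sub>M i\<in>?J. M) (sample n) shift"
    by (rule pair_measure_distr[symmetric]) (auto simp: distr_shift prob_space_imp_sigma_finite prob_space_sample)
  finally show ?thesis by (simp add: distr_shift)
qed

text \<open>On the doubled sample \<open>split_sample\<close> turns \<open>swap_signs\<close> into a permutation of
  coordinates, which preserves the product measure.\<close>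
lemma distr_swap_signs:
  "distr (sample n \<Otimes>\<^sub>M sample n) (sample n \<Otimes>\<^sub>M sample n) (swap_signs n s) = sample n \<Otimes>\<^sub>M sample n"
proof -
  define r where "r \<omega> = (\<lambda>i\<in>{..<2 * n}. \<omega> (swap_index n s i))" for \<omega> :: "nat \<Rightarrow> 'a"
  have [measurable]: "r \<in> measurable (sample (2 * n)) (sample (2 * n))"
    unfolding r_def by (intro measurable_restrict measurable_component_singleton) (auto simp: swap_index_less)
  have distr_r: "distr (sample (2 * n)) (sample (2 * n)) r = sample (2 * n)"
    unfolding r_def using distr_PiM_reindex[of "{..<2 * n}" "\<lambda>_. M" "swap_index n s" "{..<2 * n}"]
    by (simp add: prob_space_axioms inj_on_swap_index swap_index_less)
  have "distr (sample n \<Otimes>\<^sub>M sample n) (sample n \<Otimes>\<^sub>M sample n) (swap_signs n s)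
      = distr (sample (2 * n)) (sample n \<Otimes>\<^sub>M sample n) (swap_signs n s \<circ> split_sample n)"
    by (subst distr_split_sample[symmetric], rule distr_distr) measurable
  also have "\<dots> = distr (sample (2 * n)) (sample n \<Otimes>\<^sub>M sample n) (split_sample n \<circ> r)"
    by (simp add: comp_def swap_signs_split_sample r_def)
  also have "\<dots> = distr (distr (sample (2 * n)) (sample (2 * n)) r) (sample n \<Otimes>\<^sub>M sample n) (split_sample n)"
    by (rule distr_distr[symmetric]) measurable
  finally show ?thesis by (simp only: distr_r distr_split_sample)
qed

lemma integral_swap_signs:
  fixes f :: "_ \<Rightarrow> real"
  assumes [measurable]: "f \<in> borel_measurable (sample n \<Otimes>\<^sub>M sample n)"
  shows "(\<integral>z. f (swap_signs n s z) \<partial>(sample n \<Otimes>\<^sub>M sample n)) = integral\<^sup>L (sample n \<Otimes>\<^sub>M sample n) f"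
  using integral_distr[of "swap_signs n s" "sample n \<Otimes>\<^sub>M sample n" "sample n \<Otimes>\<^sub>M sample n" f]
  by (simp add: distr_swap_signs)

lemma integrable_sample_bounded:
  fixes f :: "_ \<Rightarrow> real"
  shows "f \<in> borel_measurable (sample n) \<Longrightarrow> (\<And>x. \<bar>f x\<bar> \<le> C) \<Longrightarrow> integrable (sample n) f"
  by (rule finite_measure.integrable_const_bound[OF prob_space.finite_measure[OF prob_space_sample], where B=C]) auto

lemma integrable_sample_pair_bounded:
  fixes f :: "_ \<Rightarrow> real"
  shows "f \<in> borel_measurable (sample n \<Otimes>\<^sub>M sample n) \<Longrightarrow> (\<And>z. \<bar>f z\<bar> \<le> C)
    \<Longrightarrow> integrable (sample n \<Otimes>\<^sub>M sample n) f"
  by (rule finite_measure.integrable_const_bound[OF prob_space.finite_measure[OF prob_space_sample_pair], where B=C]) auto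

lemma integral_sample_pair_iterated:
  fixes f :: "_ \<Rightarrow> real"
  assumes "f \<in> borel_measurable (sample n \<Otimes>\<^sub>M sample n)" "\<And>z. \<bar>f z\<bar> \<le> C"
  shows "integral\<^sup>L (sample n \<Otimes>\<^sub>M sample n) f = (\<integral>x. (\<integral>y. f (x, y) \<partial>sample n) \<partial>sample n)"
    and "integrable (sample n) (\<lambda>x. \<integral>y. f (x, y) \<partial>sample n)"
proof -
  interpret pair_sigma_finite "sample n" "sample n"
    by (intro pair_sigma_finite.intro prob_space_imp_sigma_finite prob_space_sample)
  have "integrable (sample n \<Otimes>\<^sub>M sample n) f"
    by (rule integrable_sample_pair_bounded[OF assms])
  then show "integral\<^sup>L (sample n \<Otimes>\<^sub>M sample n) f = (\<integral>x. (\<integral>y. f (x, y) \<partial>sample n) \<partial>sample n)"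
    and "integrable (sample n) (\<lambda>x. \<integral>y. f (x, y) \<partial>sample n)"
    by (simp_all add: integral_fst' integrable_fst')
qed

lemma integral_sample_pair_fst:
  fixes g :: "_ \<Rightarrow> real"
  assumes "g \<in> borel_measurable (sample n)" "\<And>x. \<bar>g x\<bar> \<le> C"
  shows "(\<integral>z. g (fst z) \<partial>(sample n \<Otimes>\<^sub>M sample n)) = integral\<^sup>L (sample n) g"
  using assms integral_sample_pair_iterated(1)[of "\<lambda>z. g (fst z)" n C]
  by (simp add: prob_space.prob_space[OF prob_space_sample])

lemma integral_sample_pair_snd:
  fixes g :: "_ \<Rightarrow> real"
  assumes "g \<in> borel_measurable (sample n)" "\<And>x. \<bar>g x\<bar> \<le> C"
  shows "(\<integral>z. g (snd z) \<partial>(sample n \<Otimes>\<^sub>M sample n)) = integral\<^sup>L (sample n) g"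
  using assms integral_sample_pair_iterated(1)[of "\<lambda>z. g (snd z)" n C]
  by (simp add: prob_space.prob_space[OF prob_space_sample])

lemma integral_sample_component:
  fixes g :: "'a \<Rightarrow> real"
  assumes "i < n" "g \<in> borel_measurable M"
  shows "(\<integral>x. g (x i) \<partial>sample n) = expectation g"
  using assms integral_distr[of "\<lambda>x. x i" "sample n" M g]
    distr_PiM_component[of "{..<n}" "\<lambda>_. M" i] by (simp add: prob_space_axioms)

end

locale bounded_family = prob_space M for M :: "'a measure" +
  fixes h :: "'t::countable \<Rightarrow> 'a \<Rightarrow> real"
  assumes borel_measurable_family [measurable]: "\<And>t. h t \<in> borel_measurable M"
    and abs_family_le_1: "\<And>t \<omega>. \<bar>h t \<omega>\<bar> \<le> 1"
begin

lemma integrable_family: "integrable M (h t)"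
  using abs_family_le_1 by (intro integrable_const_bound[where B=1]) auto

lemma abs_expectation_family_le_1: "\<bar>expectation (h t)\<bar> \<le> 1"
  using integral_le_const[OF integrable_family, where c=1] integral_ge_const[OF integrable_family, where c="-1"]
    abs_family_le_1 by (simp add: abs_le_iff)

definition centered :: "'t \<Rightarrow> 'a \<Rightarrow> real" where
  "centered t \<omega> = h t \<omega> - expectation (h t)"

lemma borel_measurable_centered [measurable]: "centered t \<in> borel_measurable M"
  unfolding centered_def by measurable

lemma abs_centered_le_2: "\<bar>centered t \<omega>\<bar> \<le> 2"
  using abs_family_le_1[of t \<omega>] abs_expectation_family_le_1[of t] by (simp add: centered_def)

definition sym_sup :: "nat \<Rightarrow> (nat \<Rightarrow> real) \<Rightarrow> (nat \<Rightarrow> 'a) \<times> (nat \<Rightarrow> 'a) \<Rightarrow> real" where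
  "sym_sup n s z = (SUP t. \<Sum>i<n. s i * (h t (fst z i) - h t (snd z i)))"

lemma abs_family_diff_le_2: "\<bar>h t \<omega> - h t \<omega>'\<bar> \<le> 2"
  using abs_family_le_1[of t \<omega>] abs_family_le_1[of t \<omega>'] by simp

lemma sym_sup_upper: "(\<Sum>i<n. s i * (h t (x i) - h t (y i))) \<le> sym_sup n s (x, y)"
  unfolding sym_sup_def fst_conv snd_conv
  by (intro cSUP_upper bdd_above_range_abs_le[where C="(\<Sum>i<n. \<bar>s i\<bar>) * 2"] abs_sum_mult_le
      abs_family_diff_le_2) auto

lemma abs_sym_sup_le: "\<bar>sym_sup n s z\<bar> \<le> (\<Sum>i<n. \<bar>s i\<bar>) * 2"
  unfolding sym_sup_def by (intro abs_SUP_le abs_sum_mult_le abs_family_diff_le_2)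

lemma borel_measurable_sym_sup [measurable]: "sym_sup n s \<in> borel_measurable (sample n \<Otimes>\<^sub>M sample n)"
  unfolding sym_sup_def[abs_def]
  by (rule borel_measurable_SUP_bounded[where C="(\<Sum>i<n. \<bar>s i\<bar>) * 2"])
     (measurable, intro abs_sum_mult_le abs_family_diff_le_2)

lemma borel_measurable_signed_sup_family [measurable]:
  "signed_sup n h s \<in> borel_measurable (sample n)"
  "signed_sup n centered s \<in> borel_measurable (sample n)"
  using abs_family_le_1 abs_centered_le_2 by (intro borel_measurable_signed_sup; measurable)+

lemma integrable_signed_sup_family:
  "integrable (sample n) (signed_sup n h s)"
  "integrable (sample n) (signed_sup n centered s)"
  by (rule integrable_sample_bounded[OF borel_measurable_signed_sup_family(1)
        abs_signed_sup_le[where A=1, OF abs_family_le_1]],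
      rule integrable_sample_bounded[OF borel_measurable_signed_sup_family(2)
        abs_signed_sup_le[where A=2, OF abs_centered_le_2]])

lemma integral_sum_diff_family:
  "(\<integral>y. (\<Sum>i<n. s i * (h t (x i) - h t (y i))) \<partial>sample n) = (\<Sum>i<n. s i * centered t (x i))"
proof -
  have "(\<integral>y. s i * (h t (x i) - h t (y i)) \<partial>sample n) = s i * centered t (x i)" if "i < n" for i
  proof -
    have "integrable (sample n) (\<lambda>y. h t (y i))"
      using that abs_family_le_1 by (intro integrable_sample_bounded[where C=1]) measurable
    then show ?thesis
      using that by (simp add: centered_def integral_sample_component prob_space.prob_space[OF prob_space_sample]
          Bochner_Integration.integral_diff finite_measure.integrable_const[OF prob_space.finite_measure[OF prob_space_sample]])
  qed
  moreover have "integrable (sample n) (\<lambda>y. s i * (h t (x i) - h t (y i)))" if "i < n" for i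
    using that abs_family_diff_le_2
    by (intro integrable_sample_bounded[where C="\<bar>s i\<bar> * 2"]) (measurable, simp add: abs_mult mult_left_mono)
  ultimately show ?thesis
    by (subst Bochner_Integration.integral_sum) (auto intro: sum.cong)
qed

lemma signed_sup_centered_le_integral_sym_sup:
  assumes x: "x \<in> space (sample n)"
  shows "signed_sup n centered s x \<le> (\<integral>y. sym_sup n s (x, y) \<partial>sample n)"
  unfolding signed_sup_def
proof (rule cSUP_least)
  fix t
  have "integrable (sample n) (\<lambda>y. sym_sup n s (x, y))"
    using x abs_sym_sup_le by (intro integrable_sample_bounded[where C="(\<Sum>i<n. \<bar>s i\<bar>) * 2"]) measurable
  moreover have "integrable (sample n) (\<lambda>y. \<Sum>i<n. s i * (h t (x i) - h t (y i)))"
    using abs_family_diff_le_2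
    by (intro integrable_sample_bounded[where C="(\<Sum>i<n. \<bar>s i\<bar>) * 2"] abs_sum_mult_le) measurable
  ultimately show "(\<Sum>i<n. s i * centered t (x i)) \<le> (\<integral>y. sym_sup n s (x, y) \<partial>sample n)"
    unfolding integral_sum_diff_family[symmetric]
    by (intro integral_mono sym_sup_upper)
qed simp

lemma integral_signed_sup_centered_le_sym_sup:
  "integral\<^sup>L (sample n) (signed_sup n centered s) \<le> integral\<^sup>L (sample n \<Otimes>\<^sub>M sample n) (sym_sup n s)"
proof -
  have "integral\<^sup>L (sample n) (signed_sup n centered s) \<le> (\<integral>x. (\<integral>y. sym_sup n s (x, y) \<partial>sample n) \<partial>sample n)"
  proof (rule integral_mono)
    show "integrable (sample n) (signed_sup n centered s)"
      by (rule integrable_signed_sup_family(2))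
    show "integrable (sample n) (\<lambda>x. \<integral>y. sym_sup n s (x, y) \<partial>sample n)"
      using abs_sym_sup_le by (intro integral_sample_pair_iterated(2)) measurable
  qed (rule signed_sup_centered_le_integral_sym_sup)
  also have "\<dots> = integral\<^sup>L (sample n \<Otimes>\<^sub>M sample n) (sym_sup n s)"
    using abs_sym_sup_le by (intro integral_sample_pair_iterated(1)[symmetric]) measurable
  finally show ?thesis .
qed

lemma sym_sup_swap_signs:
  assumes "sign_vector n s"
  shows "sym_sup n s (swap_signs n s z) = sym_sup n (\<lambda>_. 1) z"
proof -
  have "s i * (h t (fst (swap_signs n s z) i) - h t (snd (swap_signs n s z) i)) = h t (fst z i) - h t (snd z i)"
    if "i < n" for i t
    using assms that by (auto simp: sign_vector_def swap_signs_def)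
  then show ?thesis
    unfolding sym_sup_def by simp
qed

lemma integral_sym_sup_eq_ones:
  assumes "sign_vector n s"
  shows "integral\<^sup>L (sample n \<Otimes>\<^sub>M sample n) (sym_sup n s) = integral\<^sup>L (sample n \<Otimes>\<^sub>M sample n) (sym_sup n (\<lambda>_. 1))"
  using integral_swap_signs[of "sym_sup n s" n s] by (simp add: sym_sup_swap_signs[OF assms])

definition mean_dev :: "nat \<Rightarrow> (nat \<Rightarrow> 'a) \<Rightarrow> real" where
  "mean_dev n x = (SUP t. \<bar>(\<Sum>i<n. h t (x i)) / real n - expectation (h t)\<bar>)"

lemma abs_mean_dev_term_le_2: "\<bar>(\<Sum>i<n. h t (x i)) / real n - expectation (h t)\<bar> \<le> 2"
proof -
  have "\<bar>\<Sum>i<n. h t (x i)\<bar> \<le> real n"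
    using abs_sum_mult_le[where g="\<lambda>i. h t (x i)" and A=1 and s="\<lambda>_. 1" and n=n] abs_family_le_1 by simp
  then have "\<bar>(\<Sum>i<n. h t (x i)) / real n\<bar> \<le> 1"
    by (cases "n = 0") (simp_all add: field_simps)
  then show ?thesis
    using abs_expectation_family_le_1[of t] by linarith
qed

lemma mean_dev_upper: "\<bar>(\<Sum>i<n. h t (x i)) / real n - expectation (h t)\<bar> \<le> mean_dev n x"
  unfolding mean_dev_def
  by (intro cSUP_upper bdd_above_range_abs_le[where C=2]) (simp_all add: abs_mean_dev_term_le_2)

lemma abs_mean_dev_le_2: "\<bar>mean_dev n x\<bar> \<le> 2"
  unfolding mean_dev_def by (intro abs_SUP_le) (simp add: abs_mean_dev_term_le_2)

lemma borel_measurable_mean_dev [measurable]: "mean_dev n \<in> borel_measurable (sample n)"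
  unfolding mean_dev_def[abs_def]
  by (rule borel_measurable_SUP_bounded[where C=2]) (measurable, simp add: abs_mean_dev_term_le_2)

lemma abs_sum_centered_le: "\<bar>\<Sum>i<n. centered t (x i)\<bar> \<le> n * mean_dev n x"
proof -
  have "(\<Sum>i<n. centered t (x i)) = n * ((\<Sum>i<n. h t (x i)) / real n - expectation (h t))"
    by (cases "n = 0") (simp_all add: centered_def sum_subtractf field_simps)
  then show ?thesis
    using mean_dev_upper[where n=n and t=t and x=x] by (simp add: abs_mult mult_left_mono)
qed

lemma sym_sup_ones_le: "sym_sup n (\<lambda>_. 1) (x, y) \<le> n * mean_dev n x + n * mean_dev n y"
  unfolding sym_sup_def
proof (rule cSUP_least)
  fix t
  have "(\<Sum>i<n. 1 * (h t (fst (x, y) i) - h t (snd (x, y) i)))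
      = (\<Sum>i<n. centered t (x i)) - (\<Sum>i<n. centered t (y i))"
    by (simp add: centered_def sum_subtractf)
  with abs_sum_centered_le[where n=n and t=t and x=x] abs_sum_centered_le[where n=n and t=t and x=y]
  show "(\<Sum>i<n. 1 * (h t (fst (x, y) i) - h t (snd (x, y) i))) \<le> n * mean_dev n x + n * mean_dev n y"
    by linarith
qed simp

lemma desymmetrization:
  assumes "sign_vector n s"
  shows "integral\<^sup>L (sample n) (signed_sup n centered s) \<le> 2 * real n * integral\<^sup>L (sample n) (mean_dev n)"
proof -
  have integrable: "integrable (sample n \<Otimes>\<^sub>M sample n) (\<lambda>z. n * mean_dev n (f z))"
    if [measurable]: "f \<in> measurable (sample n \<Otimes>\<^sub>M sample n) (sample n)" for f
    using abs_mean_dev_le_2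
    by (intro integrable_sample_pair_bounded[where C="n * 2"]) (measurable, simp add: abs_mult mult_left_mono)
  have "integral\<^sup>L (sample n) (signed_sup n centered s) \<le> integral\<^sup>L (sample n \<Otimes>\<^sub>M sample n) (sym_sup n (\<lambda>_. 1))"
    using integral_signed_sup_centered_le_sym_sup[where n=n and s=s] integral_sym_sup_eq_ones[OF assms] by linarith
  also have "\<dots> \<le> (\<integral>z. n * mean_dev n (fst z) + n * mean_dev n (snd z) \<partial>(sample n \<Otimes>\<^sub>M sample n))"
  proof (rule integral_mono)
    show "integrable (sample n \<Otimes>\<^sub>M sample n) (sym_sup n (\<lambda>_. 1))"
      using abs_sym_sup_le[where s="\<lambda>_. 1"] by (intro integrable_sample_pair_bounded[where C="n * 2"]) auto
    show "integrable (sample n \<Otimes>\<^sub>M sample n) (\<lambda>z. n * mean_dev n (fst z) + n * mean_dev n (snd z))"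
      by (intro Bochner_Integration.integrable_add integrable) measurable
    show "sym_sup n (\<lambda>_. 1) z \<le> n * mean_dev n (fst z) + n * mean_dev n (snd z)" for z
      using sym_sup_ones_le[where n=n and x="fst z" and y="snd z"] by simp
  qed
  also have "\<dots> = 2 * real n * integral\<^sup>L (sample n) (mean_dev n)"
    using integrable[of fst] integrable[of snd]
      integral_sample_pair_fst[where g="mean_dev n" and C=2] integral_sample_pair_snd[where g="mean_dev n" and C=2]
    by (simp add: abs_mean_dev_le_2)
  finally show ?thesis .
qed

lemma sym_sup_le_signed_sup: "sym_sup n s (x, y) \<le> signed_sup n h s x + signed_sup n h (\<lambda>i. - s i) y"
  unfolding sym_sup_def
proof (rule cSUP_least)
  fix t
  have "(\<Sum>i<n. s i * (h t (fst (x, y) i) - h t (snd (x, y) i)))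
      = (\<Sum>i<n. s i * h t (x i)) + (\<Sum>i<n. - s i * h t (y i))"
    by (simp add: algebra_simps sum_subtractf sum_negf)
  with signed_sup_upper[where g=h and A=1 and n=n and s=s and t=t and x=x, OF abs_family_le_1]
    signed_sup_upper[where g=h and A=1 and n=n and s="\<lambda>i. - s i" and t=t and x=y, OF abs_family_le_1]
  show "(\<Sum>i<n. s i * (h t (fst (x, y) i) - h t (snd (x, y) i))) \<le> signed_sup n h s x + signed_sup n h (\<lambda>i. - s i) y"
    by linarith
qed simp

lemma integral_sym_sup_le:
  "integral\<^sup>L (sample n \<Otimes>\<^sub>M sample n) (sym_sup n s)
    \<le> integral\<^sup>L (sample n) (signed_sup n h s) + integral\<^sup>L (sample n) (signed_sup n h (\<lambda>i. - s i))"
proof -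
  have bounded: "\<bar>signed_sup n h s' x\<bar> \<le> (\<Sum>i<n. \<bar>s' i\<bar>) * 1" for s' x
    by (rule abs_signed_sup_le[where g=h and A=1, OF abs_family_le_1])
  have integrable: "integrable (sample n \<Otimes>\<^sub>M sample n) (\<lambda>z. signed_sup n h s' (f z))"
    if "f \<in> measurable (sample n \<Otimes>\<^sub>M sample n) (sample n)" for s' f
    using that bounded by (intro integrable_sample_pair_bounded) measurable
  have "integral\<^sup>L (sample n \<Otimes>\<^sub>M sample n) (sym_sup n s)
      \<le> (\<integral>z. signed_sup n h s (fst z) + signed_sup n h (\<lambda>i. - s i) (snd z) \<partial>(sample n \<Otimes>\<^sub>M sample n))"
  proof (rule integral_mono)
    show "integrable (sample n \<Otimes>\<^sub>M sample n) (sym_sup n s)"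
      using abs_sym_sup_le by (intro integrable_sample_pair_bounded[where C="(\<Sum>i<n. \<bar>s i\<bar>) * 2"]) auto
    show "integrable (sample n \<Otimes>\<^sub>M sample n) (\<lambda>z. signed_sup n h s (fst z) + signed_sup n h (\<lambda>i. - s i) (snd z))"
      by (intro Bochner_Integration.integrable_add integrable) measurable
    show "sym_sup n s z \<le> signed_sup n h s (fst z) + signed_sup n h (\<lambda>i. - s i) (snd z)" for z
      using sym_sup_le_signed_sup[where n=n and s=s and x="fst z" and y="snd z"] by simp
  qed
  also have "\<dots> = integral\<^sup>L (sample n) (signed_sup n h s) + integral\<^sup>L (sample n) (signed_sup n h (\<lambda>i. - s i))"
    using integrable[of fst s] integrable[of snd "\<lambda>i. - s i"]
      integral_sample_pair_fst[OF borel_measurable_signed_sup_family(1) bounded]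
      integral_sample_pair_snd[OF borel_measurable_signed_sup_family(1) bounded]
    by simp
  finally show ?thesis .
qed

text \<open>\<open>signed_sup n centered (\<lambda>_. -1) x\<close> is the one-sided deviation
  \<open>SUP t. \<Sum>i<n. expectation (h t) - h t (x i)\<close> of the empirical process.\<close>
lemma symmetrization:
  "integral\<^sup>L (sample n) (signed_sup n centered (\<lambda>_. -1))
    \<le> 2 * sign_avg n (\<lambda>s. integral\<^sup>L (sample n) (signed_sup n h s))"
proof -
  let ?E = "\<lambda>s. integral\<^sup>L (sample n) (signed_sup n h s)"
  let ?S = "\<lambda>s. integral\<^sup>L (sample n \<Otimes>\<^sub>M sample n) (sym_sup n s)"
  have "integral\<^sup>L (sample n) (signed_sup n centered (\<lambda>_. -1)) \<le> ?S (\<lambda>_. -1)"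
    by (rule integral_signed_sup_centered_le_sym_sup)
  also have "\<dots> = sign_avg n ?S"
  proof -
    have "?S s = ?S (\<lambda>_. -1)" if "sign_vector n s" for s
      using integral_sym_sup_eq_ones[OF that] integral_sym_sup_eq_ones[of n "\<lambda>_. -1"]
      by (simp add: sign_vector_def)
    then show ?thesis
      using sign_avg_cong[of n ?S "\<lambda>_. ?S (\<lambda>_. -1)"] by simp
  qed
  also have "\<dots> \<le> sign_avg n (\<lambda>s. ?E s + ?E (\<lambda>i. - s i))"
    by (intro sign_avg_mono integral_sym_sup_le)
  also have "\<dots> = 2 * sign_avg n ?E"
    using sign_avg_uminus[where F="?E"] by (simp add: sign_avg_add)
  finally show ?thesis .
qed

end

lemma sum_lessThan_mult_blocks:
  fixes g :: "nat \<Rightarrow> 'b::comm_monoid_add"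
  shows "(\<Sum>i<m * n. g i) = (\<Sum>b<m. \<Sum>i<n. g (b * n + i))"
  by (simp add: sum.nat_group[symmetric] sum.atLeastLessThan_shift_0[where m="_ * n"] atLeast0LessThan comp_def)

definition block :: "nat \<Rightarrow> nat \<Rightarrow> (nat \<Rightarrow> 'a) \<Rightarrow> nat \<Rightarrow> 'a" where
  "block n b x = (\<lambda>i\<in>{..<n}. x (b * n + i))"

lemma block_index_less: "b < m \<Longrightarrow> i < n \<Longrightarrow> b * n + i < m * n" for b m i n :: nat
proof -
  assume "b < m" "i < n"
  then have "b * n + i < Suc b * n" by simp
  also have "\<dots> \<le> m * n" using \<open>b < m\<close> by (intro mult_right_mono) auto
  finally show ?thesis .
qed

context prob_space
begin

lemma measurable_block [measurable]:
  "b < m \<Longrightarrow> block n b \<in> measurable (sample (m * n)) (sample n)"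
  unfolding block_def
  by (intro measurable_restrict measurable_component_singleton) (auto intro: block_index_less)

lemma distr_block: "b < m \<Longrightarrow> distr (sample (m * n)) (sample n) (block n b) = sample n"
  unfolding block_def
  using distr_PiM_reindex[of "{..<m * n}" "\<lambda>_. M" "\<lambda>i. b * n + i" "{..<n}"]
  by (simp add: prob_space_axioms inj_on_def block_index_less)

end

context bounded_family
begin

lemma mean_dev_mult_le_blocks:
  assumes "0 < m"
  shows "mean_dev (m * n) x \<le> (\<Sum>b<m. mean_dev n (block n b x)) / m"
  unfolding mean_dev_def[of "m * n"]
proof (rule cSUP_least)
  fix t
  let ?dev = "\<lambda>b. (\<Sum>i<n. h t (x (b * n + i))) / real n - expectation (h t)"
  have "(\<Sum>i<m * n. h t (x i)) / real (m * n) - expectation (h t) = (\<Sum>b<m. ?dev b) / m"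
    using assms by (simp add: sum_lessThan_mult_blocks sum_subtractf sum_divide_distrib[symmetric] field_simps)
  then have "\<bar>(\<Sum>i<m * n. h t (x i)) / real (m * n) - expectation (h t)\<bar> \<le> (\<Sum>b<m. \<bar>?dev b\<bar>) / m"
    by (simp add: divide_right_mono sum_abs)
  also have "\<dots> \<le> (\<Sum>b<m. mean_dev n (block n b x)) / m"
    using mean_dev_upper[where n=n and t=t and x="block n b x" for b]
    by (intro divide_right_mono sum_mono) (simp_all add: block_def)
  finally show "\<bar>(\<Sum>i<m * n. h t (x i)) / real (m * n) - expectation (h t)\<bar> \<le> (\<Sum>b<m. mean_dev n (block n b x)) / m" .
qed simp

lemma integral_mean_dev_mult_le:
  assumes "0 < m"
  shows "integral\<^sup>L (sample (m * n)) (mean_dev (m * n)) \<le> integral\<^sup>L (sample n) (mean_dev n)"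
proof -
  have integrable_block: "integrable (sample (m * n)) (\<lambda>x. mean_dev n (block n b x))" if "b < m" for b
    using that abs_mean_dev_le_2 by (intro integrable_sample_bounded[where C=2]) measurable
  have integral_block: "(\<integral>x. mean_dev n (block n b x) \<partial>sample (m * n)) = integral\<^sup>L (sample n) (mean_dev n)"
    if "b < m" for b
    using that integral_distr[of "block n b" "sample (m * n)" "sample n" "mean_dev n"]
    by (simp add: distr_block)
  have "integral\<^sup>L (sample (m * n)) (mean_dev (m * n)) \<le> (\<integral>x. (\<Sum>b<m. mean_dev n (block n b x)) / m \<partial>sample (m * n))"
  proof (rule integral_mono)
    show "integrable (sample (m * n)) (mean_dev (m * n))"
      using abs_mean_dev_le_2 by (intro integrable_sample_bounded[where C=2]) auto
    show "integrable (sample (m * n)) (\<lambda>x. (\<Sum>b<m. mean_dev n (block n b x)) / m)"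
      using integrable_block by (intro Bochner_Integration.integrable_divide Bochner_Integration.integrable_sum) auto
  qed (rule mean_dev_mult_le_blocks[OF assms])
  also have "\<dots> = integral\<^sup>L (sample n) (mean_dev n)"
    using assms integrable_block integral_block by simp
  finally show ?thesis .
qed

end

section \<open>Binary sequences\<close>

lemma binseq_distr_prob_space: "binseq_distr \<mu> \<Longrightarrow> prob_space \<mu>"
  by (simp add: binseq_distr_def)

lemma binseq_distr_measurable_coordinate:
  assumes "binseq_distr \<mu>"
  shows "(\<lambda>\<omega>. \<omega> j) \<in> measurable \<mu> (count_space UNIV)"
proof -
  have sets: "sets \<mu> = sets (\<Pi>\<^sub>M i\<in>(UNIV::nat set). count_space (UNIV::bool set))"
    using assms by (simp add: binseq_distr_def)
  show ?thesis
    unfolding measurable_cong_sets[OF sets refl] by measurable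
qed

lemma integral_of_bool: "(\<integral>\<omega>. of_bool (P \<omega>) \<partial>M) = measure M {\<omega> \<in> space M. P \<omega>}"
proof -
  have "(\<lambda>\<omega>. of_bool (P \<omega>) :: real) = indicator {\<omega>. P \<omega>}"
    by (auto simp: indicator_def)
  then show ?thesis
    by (simp add: Int_def conj_commute)
qed

definition bit_family :: "nat \<Rightarrow> (nat \<Rightarrow> bool) \<Rightarrow> real" where
  "bit_family j \<omega> = of_bool (\<omega> j)"

definition mismatch_family :: "nat \<times> nat \<Rightarrow> (nat \<Rightarrow> bool) \<Rightarrow> real" where
  "mismatch_family t \<omega> = of_bool (\<omega> (fst t) \<noteq> \<omega> (snd t))"

lemma bounded_family_bit:
  assumes "binseq_distr \<mu>"
  shows "bounded_family \<mu> bit_family"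
proof (intro bounded_family.intro bounded_family_axioms.intro binseq_distr_prob_space[OF assms])
  note [measurable] = binseq_distr_measurable_coordinate[OF assms]
  show "bit_family j \<in> borel_measurable \<mu>" for j
    unfolding bit_family_def by measurable
qed (simp add: bit_family_def)

lemma bounded_family_mismatch:
  assumes "binseq_distr \<mu>"
  shows "bounded_family \<mu> mismatch_family"
proof (intro bounded_family.intro bounded_family_axioms.intro binseq_distr_prob_space[OF assms])
  note [measurable] = binseq_distr_measurable_coordinate[OF assms]
  show "mismatch_family t \<in> borel_measurable \<mu>" for t
    unfolding mismatch_family_def by measurable
qed (simp add: mismatch_family_def)

lemma Delta_eq_integral_mean_dev:
  assumes "binseq_distr \<mu>"
  shows "Delta n \<mu> = integral\<^sup>L (\<Pi>\<^sub>M i\<in>{..<n}. \<mu>) (bounded_family.mean_dev \<mu> bit_family n)"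
proof -
  interpret bounded_family \<mu> bit_family
    using assms by (rule bounded_family_bit)
  show ?thesis
    unfolding Delta_def mean_dev_def[abs_def] bit_family_def integral_of_bool ..
qed

lemma expectation_mismatch_family: "(\<integral>\<omega>. mismatch_family t \<omega> \<partial>\<mu>) = xi \<mu> (fst t) (snd t)"
  unfolding mismatch_family_def integral_of_bool xi_def ..

lemma infinite_covering_number_uncovered:
  assumes "covering_number \<mu> \<epsilon> = \<infinity>" "finite S"
  shows "\<exists>i. \<forall>s\<in>S. \<epsilon> < xi \<mu> i s"
proof (rule ccontr)
  assume "\<nexists>i. \<forall>s\<in>S. \<epsilon> < xi \<mu> i s"
  then have "enat (card S) \<in> (\<lambda>S. if finite S then enat (card S) else \<infinity>) ` {S. \<forall>i. \<exists>s\<in>S. xi \<mu> i s \<le> \<epsilon>}"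
    using assms(2) by (auto simp: not_less intro!: image_eqI[where x=S])
  then have "covering_number \<mu> \<epsilon> \<le> enat (card S)"
    unfolding covering_number_def by (rule Inf_lower)
  with assms(1) show False by simp
qed

lemma infinite_covering_number_far_pair_equal_columns:
  fixes x :: "nat \<Rightarrow> nat \<Rightarrow> bool"
  assumes "covering_number \<mu> \<epsilon> = \<infinity>"
  shows "\<exists>j k. \<epsilon> < xi \<mu> j k \<and> (\<forall>i<n. x i j = x i k)"
proof -
  define column where "column j = (\<lambda>i\<in>{..<n}. x i j)" for j
  have "range column \<subseteq> {..<n} \<rightarrow>\<^sub>E UNIV"
    by (auto simp: column_def)
  then have "finite (range column)"
    by (rule finite_subset) (simp add: finite_PiE)
  \<comment> \<open>One representative index for each of the finitely many columns of the sample.\<close>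
  then obtain j where j: "\<forall>k\<in>inv column ` range column. \<epsilon> < xi \<mu> j k"
    using infinite_covering_number_uncovered[OF assms] by blast
  define k where "k = inv column (column j)"
  have "column k = column j"
    unfolding k_def by (rule f_inv_into_f) simp
  then have "x i j = x i k" if "i < n" for i
  proof -
    have "column k i = column j i" by (simp add: \<open>column k = column j\<close>)
    with that show ?thesis by (simp add: column_def)
  qed
  moreover have "\<epsilon> < xi \<mu> j k"
    using j by (simp add: k_def)
  ultimately show ?thesis by blast
qed

lemma infinite_covering_number_less:
  assumes "binseq_distr \<mu>" "covering_number \<mu> \<epsilon> = \<infinity>"
  shows "3 * \<epsilon> < 2"
proof -
  interpret bounded_family \<mu> mismatch_family
    using assms(1) by (rule bounded_family_mismatch)
  obtain b where b: "\<epsilon> < xi \<mu> b 0"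
    using infinite_covering_number_uncovered[OF assms(2), of "{0}"] by auto
  obtain c where c: "\<epsilon> < xi \<mu> c 0" "\<epsilon> < xi \<mu> c b"
    using infinite_covering_number_uncovered[OF assms(2), of "{0, b}"] by auto
  have "xi \<mu> b 0 + xi \<mu> c 0 + xi \<mu> c b
      = expectation (\<lambda>\<omega>. mismatch_family (b, 0) \<omega> + mismatch_family (c, 0) \<omega> + mismatch_family (c, b) \<omega>)"
    using integrable_family by (simp add: expectation_mismatch_family)
  \<comment> \<open>Among three bits, at most two of the three pairs differ.\<close>
  also have "\<dots> \<le> 2"
  proof (intro integral_le_const Bochner_Integration.integrable_add integrable_family AE_I2)
    show "mismatch_family (b, 0) \<omega> + mismatch_family (c, 0) \<omega> + mismatch_family (c, b) \<omega> \<le> 2" for \<omega>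
      by (cases "\<omega> b"; cases "\<omega> c"; cases "\<omega> 0") (simp_all add: mismatch_family_def)
  qed
  finally show ?thesis
    using b c by linarith
qed

lemma SUP_signed_bit_diff_le:
  fixes p :: "nat \<Rightarrow> real" and x :: "nat \<Rightarrow> nat \<Rightarrow> bool"
  assumes p: "\<And>j. 0 \<le> p j" "\<And>j. p j \<le> 1"
  defines "g \<equiv> \<lambda>j \<omega>. bit_family j \<omega> - p j"
  shows "(SUP t. \<Sum>i<n. s i * (bit_family (fst t) (x i) - bit_family (snd t) (x i)))
    \<le> signed_sup n g s x + signed_sup n g (\<lambda>i. - s i) x + \<bar>\<Sum>i<n. s i\<bar>"
proof (rule cSUP_least)
  fix t :: "nat \<times> nat"
  obtain j k where t: "t = (j, k)" by (cases t)
  have abs_g: "\<bar>g j \<omega>\<bar> \<le> 1" for j \<omega>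
    using p[of j] by (simp add: g_def bit_family_def)
  have "(\<Sum>i<n. s i * (bit_family (fst t) (x i) - bit_family (snd t) (x i)))
      = (\<Sum>i<n. s i * g j (x i) + - s i * g k (x i) + (p j - p k) * s i)"
    by (rule sum.cong) (simp_all add: t g_def algebra_simps)
  also have "\<dots> = (\<Sum>i<n. s i * g j (x i)) + (\<Sum>i<n. - s i * g k (x i)) + (p j - p k) * (\<Sum>i<n. s i)"
    by (simp add: sum.distrib sum_subtractf sum_negf sum_distrib_left)
  also have "\<dots> \<le> signed_sup n g s x + signed_sup n g (\<lambda>i. - s i) x + \<bar>\<Sum>i<n. s i\<bar>"
  proof -
    have "\<bar>p j - p k\<bar> \<le> 1"
      using p[of j] p[of k] by (simp add: abs_le_iff)
    then have "\<bar>(p j - p k) * (\<Sum>i<n. s i)\<bar> \<le> \<bar>\<Sum>i<n. s i\<bar>"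
      by (simp add: abs_mult mult_left_le_one_le)
    then show ?thesis
      using signed_sup_upper[where g=g and A=1 and n=n and s=s and t=j and x=x, OF abs_g]
        signed_sup_upper[where g=g and A=1 and n=n and s="\<lambda>i. - s i" and t=k and x=x, OF abs_g]
      by linarith
  qed
  finally show "(\<Sum>i<n. s i * (bit_family (fst t) (x i) - bit_family (snd t) (x i)))
    \<le> signed_sup n g s x + signed_sup n g (\<lambda>i. - s i) x + \<bar>\<Sum>i<n. s i\<bar>" .
qed simp

text \<open>Here the contraction principle enters, through \<open>mismatch_family t = \<bar>bit_family j - bit_family k\<bar>\<close>
  for \<open>t = (j, k)\<close>.\<close>
lemma sign_avg_signed_sup_mismatch_le:
  fixes p :: "nat \<Rightarrow> real" and x :: "nat \<Rightarrow> nat \<Rightarrow> bool"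
  assumes p: "\<And>j. 0 \<le> p j" "\<And>j. p j \<le> 1"
  defines "g \<equiv> \<lambda>j \<omega>. bit_family j \<omega> - p j"
  shows "sign_avg n (\<lambda>s. signed_sup n mismatch_family s x)
    \<le> sign_avg n (\<lambda>s. signed_sup n g s x + signed_sup n g (\<lambda>i. - s i) x + \<bar>\<Sum>i<n. s i\<bar>)"
proof -
  let ?a = "\<lambda>i t. bit_family (fst t) (x i) - bit_family (snd t) (x i)"
  have "mismatch_family t \<omega> = \<bar>bit_family (fst t) \<omega> - bit_family (snd t) \<omega>\<bar>" for t \<omega>
    by (simp add: mismatch_family_def bit_family_def)
  then have "signed_sup n mismatch_family s x = (SUP t. 0 + (\<Sum>i<n. s i * \<bar>?a i t\<bar>))" for s
    by (simp only: signed_sup_def add_0_left)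
  then have "sign_avg n (\<lambda>s. signed_sup n mismatch_family s x)
      \<le> sign_avg n (\<lambda>s. SUP t. 0 + (\<Sum>i<n. s i * ?a i t))"
    using sign_avg_SUP_abs_le[of ?a 1 "\<lambda>_. 0" 0 n] by (simp add: bit_family_def)
  also have "\<dots> \<le> sign_avg n (\<lambda>s. signed_sup n g s x + signed_sup n g (\<lambda>i. - s i) x + \<bar>\<Sum>i<n. s i\<bar>)"
    using SUP_signed_bit_diff_le[OF p] unfolding g_def by (intro sign_avg_mono) simp
  finally show ?thesis .
qed

lemma infinite_covering_number_le_integral_signed_sup:
  assumes \<mu>: "binseq_distr \<mu>" and cov: "covering_number \<mu> \<epsilon> = \<infinity>"
  shows "n * \<epsilon> \<le> integral\<^sup>L (\<Pi>\<^sub>M i\<in>{..<n}. \<mu>) (signed_sup n (bounded_family.centered \<mu> mismatch_family) (\<lambda>_. -1))"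
proof -
  interpret prob_space \<mu>
    using \<mu> by (rule binseq_distr_prob_space)
  interpret bounded_family \<mu> mismatch_family
    using \<mu> by (rule bounded_family_mismatch)
  have "n * \<epsilon> \<le> signed_sup n centered (\<lambda>_. -1) x" for x
  proof -
    obtain j k where jk: "\<epsilon> < xi \<mu> j k" "\<forall>i<n. x i j = x i k"
      using infinite_covering_number_far_pair_equal_columns[OF cov] by blast
    have "n * \<epsilon> \<le> n * xi \<mu> j k"
      using jk(1) by (simp add: mult_left_mono)
    also have "\<dots> = (\<Sum>i<n. -1 * centered (j, k) (x i))"
      using jk(2) by (simp add: centered_def mismatch_family_def expectation_mismatch_family)
    also have "\<dots> \<le> signed_sup n centered (\<lambda>_. -1) x"
      by (rule signed_sup_upper[where A=2, OF abs_centered_le_2])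
    finally show ?thesis .
  qed
  then show ?thesis
    by (intro prob_space.integral_ge_const[OF prob_space_sample] AE_I2 integrable_signed_sup_family(2))
qed

lemma sign_avg_integral_signed_sup_mismatch_le:
  assumes \<mu>: "binseq_distr \<mu>"
  shows "sign_avg n (\<lambda>s. integral\<^sup>L (\<Pi>\<^sub>M i\<in>{..<n}. \<mu>) (signed_sup n mismatch_family s))
    \<le> 4 * real n * Delta n \<mu> + sqrt n"
proof -
  interpret prob_space \<mu>
    using \<mu> by (rule binseq_distr_prob_space)
  interpret bounded_family \<mu> bit_family
    using \<mu> by (rule bounded_family_bit)
  define p where "p j = expectation (bit_family j)" for j
  have p: "0 \<le> p j" "p j \<le> 1" for j
    using abs_expectation_family_le_1[of j] unfolding p_def
    by (auto intro: Bochner_Integration.integral_nonneg simp: bit_family_def)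
  have centered: "centered = (\<lambda>j \<omega>. bit_family j \<omega> - p j)"
    by (simp add: centered_def[abs_def] p_def)
  let ?C = "\<lambda>s. integral\<^sup>L (sample n) (signed_sup n centered s)"
  have integrable_const: "integrable (sample n) (\<lambda>_. c)" for c :: real
    by (rule finite_measure.integrable_const[OF prob_space.finite_measure[OF prob_space_sample]])
  have "sign_avg n (\<lambda>s. integral\<^sup>L (sample n) (signed_sup n mismatch_family s))
      \<le> sign_avg n (\<lambda>s. \<integral>x. signed_sup n centered s x + signed_sup n centered (\<lambda>i. - s i) x + \<bar>\<Sum>i<n. s i\<bar> \<partial>sample n)"
    unfolding centered
    by (intro sign_avg_integral_mono sign_avg_signed_sup_mismatch_le[OF p] Bochner_Integration.integrable_add
        integrable_const bounded_family.integrable_signed_sup_family(1)[OF bounded_family_mismatch[OF \<mu>]]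
        integrable_signed_sup_family(2)[unfolded centered])
  also have "\<dots> = sign_avg n (\<lambda>s. ?C s + ?C (\<lambda>i. - s i) + \<bar>\<Sum>i<n. s i\<bar>)"
    by (intro sign_avg_cong) (simp add: Bochner_Integration.integral_add Bochner_Integration.integrable_add
        integrable_signed_sup_family integrable_const prob_space.prob_space[OF prob_space_sample])
  also have "\<dots> \<le> sign_avg n (\<lambda>s. 4 * real n * integral\<^sup>L (sample n) (mean_dev n) + \<bar>\<Sum>i<n. s i\<bar>)"
  proof (intro sign_avg_mono add_right_mono)
    fix s assume s: "sign_vector n s"
    then have s': "sign_vector n (\<lambda>i. - s i)"
      by (auto simp: sign_vector_def)
    show "?C s + ?C (\<lambda>i. - s i) \<le> 4 * real n * integral\<^sup>L (sample n) (mean_dev n)"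
      using desymmetrization[OF s] desymmetrization[OF s'] by linarith
  qed
  also have "\<dots> \<le> 4 * real n * Delta n \<mu> + sqrt n"
    using sign_avg_abs_sum_le_sqrt[of n] by (simp add: sign_avg_add Delta_eq_integral_mean_dev[OF \<mu>])
  finally show ?thesis .
qed

lemma infinite_covering_number_le_Delta_plus:
  assumes \<mu>: "binseq_distr \<mu>" and cov: "covering_number \<mu> \<epsilon> = \<infinity>" and n: "0 < n"
  shows "\<epsilon> \<le> 8 * Delta n \<mu> + 2 / sqrt n"
proof -
  interpret bounded_family \<mu> mismatch_family
    using \<mu> by (rule bounded_family_mismatch)
  have "n * \<epsilon> \<le> 2 * sign_avg n (\<lambda>s. integral\<^sup>L (sample n) (signed_sup n mismatch_family s))"
    using infinite_covering_number_le_integral_signed_sup[OF \<mu> cov, of n] symmetrization[of n] by linarith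
  also have "\<dots> \<le> 2 * (4 * real n * Delta n \<mu> + sqrt n)"
    using sign_avg_integral_signed_sup_mismatch_le[OF \<mu>, of n] by (rule mult_left_mono) simp
  also have "\<dots> = n * (8 * Delta n \<mu> + 2 / sqrt n)"
    using n by (simp add: field_simps)
  finally show ?thesis
    using n by simp
qed

text \<open>The error term \<open>2 / sqrt n\<close> is removed by passing to the sample sizes \<open>m * n\<close>,
  along which \<open>Delta\<close> does not increase.\<close>
lemma infinite_covering_number_le_Delta:
  assumes \<mu>: "binseq_distr \<mu>" and cov: "covering_number \<mu> \<epsilon> = \<infinity>" and n: "0 < n"
  shows "\<epsilon> \<le> 8 * Delta n \<mu>"
proof -
  interpret bounded_family \<mu> bit_family
    using \<mu> by (rule bounded_family_bit)
  have bound: "\<epsilon> - 8 * Delta n \<mu> \<le> 2 * sqrt (inverse (real (Suc m)))" for m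
  proof -
    have "Delta (Suc m * n) \<mu> \<le> Delta n \<mu>"
      using integral_mean_dev_mult_le[of "Suc m" n] by (simp add: Delta_eq_integral_mean_dev[OF \<mu>])
    moreover have "2 / sqrt (real (Suc m * n)) \<le> 2 * sqrt (inverse (real (Suc m)))"
    proof -
      have "Suc m \<le> Suc m * n"
        using n mult_le_mono2[of 1 n "Suc m"] by simp
      then have "sqrt (Suc m) \<le> sqrt (Suc m * n)"
        by (intro real_sqrt_le_mono) (simp only: of_nat_le_iff)
      then have "inverse (sqrt (Suc m * n)) \<le> inverse (sqrt (Suc m))"
        by (intro le_imp_inverse_le) auto
      then show ?thesis
        by (simp add: real_sqrt_inverse divide_inverse)
    qed
    ultimately show ?thesis
      using infinite_covering_number_le_Delta_plus[OF \<mu> cov, of "Suc m * n"] n by simp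
  qed
  have "(\<lambda>m. 2 * sqrt (inverse (real (Suc m)))) \<longlonglongrightarrow> 2 * sqrt 0"
    by (intro tendsto_intros LIMSEQ_inverse_real_of_nat)
  from tendsto_lowerbound[OF this always_eventually[OF allI[OF bound]]] show ?thesis
    by simp
qed

lemma not_xi_totally_bounded_imp_infinite_covering_number:
  assumes "\<not> xi_totally_bounded \<mu>"
  obtains \<epsilon> :: real where "0 < \<epsilon>" "covering_number \<mu> \<epsilon> = \<infinity>"
proof -
  obtain \<epsilon> :: real where "0 < \<epsilon>" "\<not> covering_number \<mu> \<epsilon> < \<infinity>"
    using assms unfolding xi_totally_bounded_def by auto
  then show ?thesis
    using that by (cases "covering_number \<mu> \<epsilon>") auto
qed

theorem theorem4:
  fixes \<mu> :: "(nat \<Rightarrow> bool) measure"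
  assumes "binseq_distr \<mu>"
  shows "(\<not> xi_totally_bounded \<mu> \<longrightarrow>
           (\<forall>\<epsilon>::real. 0 < \<epsilon> \<and> \<epsilon> \<le> 1 \<and> covering_number \<mu> \<epsilon> = \<infinity> \<longrightarrow>
              (\<forall>n::nat. n \<ge> 1 \<longrightarrow> Delta n \<mu> \<ge> \<epsilon>\<^sup>2 / 6)))
       \<and> ((\<lambda>n. Delta n \<mu>) \<longlonglongrightarrow> 0 \<longrightarrow> xi_totally_bounded \<mu>)"
proof -
  have "\<epsilon>\<^sup>2 / 6 \<le> Delta n \<mu>" if "0 < \<epsilon>" "covering_number \<mu> \<epsilon> = \<infinity>" "1 \<le> n" for \<epsilon> n
  proof -
    have "3 * \<epsilon> < 2"
      using assms that(2) by (rule infinite_covering_number_less)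
    with \<open>0 < \<epsilon>\<close> have "\<epsilon>\<^sup>2 / 6 \<le> \<epsilon> / 8"
      by (simp add: power2_eq_square field_simps)
    also have "\<dots> \<le> Delta n \<mu>"
      using infinite_covering_number_le_Delta[OF assms that(2), of n] that(3) by linarith
    finally show ?thesis .
  qed
  moreover have "xi_totally_bounded \<mu>" if lim: "(\<lambda>n. Delta n \<mu>) \<longlonglongrightarrow> 0"
  proof (rule ccontr)
    assume "\<not> xi_totally_bounded \<mu>"
    then obtain \<epsilon> :: real where "0 < \<epsilon>" and cov: "covering_number \<mu> \<epsilon> = \<infinity>"
      by (rule not_xi_totally_bounded_imp_infinite_covering_number)
    have "\<epsilon> / 8 \<le> Delta n \<mu>" if "1 \<le> n" for n
      using infinite_covering_number_le_Delta[OF assms cov, of n] that by linarith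
    then have "eventually (\<lambda>n. \<epsilon> / 8 \<le> Delta n \<mu>) sequentially"
      by (rule eventually_sequentiallyI)
    from tendsto_lowerbound[OF lim this] \<open>0 < \<epsilon>\<close> show False
      by simp
  qed
  ultimately show ?thesis by auto
qed

end
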